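(* Let $\mathcal M$ be a valid catalytic machine with work space $s=s(n)$ and catalytic space $c=c(n)$, where $\log n\le s\le c\le 2^s$, and fix an input $x$. Then $$\mathbb E_{\tau\in\{0,1\}^c}\big[|V(\mathcal G^0_{\mathcal M,x}(\mathrm{acc}_\tau))|\big]\le 2^s\quad\text{and}\quad \mathbb E_{\tau\in\{0,1\}^c}\big[|V(\mathcal G^0_{\mathcal M,x}(\mathrm{rej}_\tau))|\big]\le 2^s,$$ where $\tau$ is uniform.
   Context: A catalytic machine has a read-only input tape holding $x$, a work tape of length $s$ initialized to $0^s$, a catalytic tape of length $c$ initialized to arbitrary $\tau$; non-deterministic/randomized machines have at each step a 0-choice and a 1-choice of transition (deterministic transitions count as both). It is valid if for every $x,\tau$ and every sequence of choices it halts in finite time with catalytic tape $\tau$. Convention: all auxiliary configuration information (internal state, head positions) is recorded on the work tape, so every configuration is a pair $\langle\pi,u\rangle$ with catalytic tape content $\pi\in\{0,1\}^c$ and work tape content $u\in\{0,1\}^s$; the start configuration is $\langle\tau,0^s\rangle$, the unique accepting halt configuration is $\mathrm{acc}_\tau=\langle\tau,1\,1\,0^{s-2}\rangle$ and the unique rejecting halt configuration is $\mathrm{rej}_\tau=\langle\tau,1\,0\,0^{s-2}\rangle$. The configuration graph $\mathcal G_{\mathcal M,x}$ has all configurations as vertices and a directed edge from $v$ to $v'$ when $v'$ is reached from $v$ in one step, labeled by the choice bit(s) ($b$ for a $b$-choice, both 0 and 1 for deterministic steps). The $0$-graph $\mathcal G^0_{\mathcal M,x}$ is the undirected graph keeping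 only edges labeled $0$ and forgetting directions; $\mathcal G^0_{\mathcal M,x}(v)$ denotes the connected component of $v$ in it. *)

theory Defs
  imports Complex_Main
begin

text \<open>A catalytic machine is modelled, per input x, by its one-step transition
  function: M x b v is the configuration reached from v using the b-choice
  (deterministic steps have M x False v = M x True v).  All auxiliary
  information (state, head positions) lives on the work tape.\<close>

type_synonym config = "bool list \<times> bool list"
type_synonym machine = "bool list \<Rightarrow> bool \<Rightarrow> config \<Rightarrow> config"

definition acc_work :: "nat \<Rightarrow> bool list" where
  "acc_work s = [True, True] @ replicate (s - 2) False"

definition rej_work :: "nat \<Rightarrow> bool list" where
  "rej_work s = [True, False] @ replicate (s - 2) False"

definition acc_conf :: "nat \<Rightarrow> bool list \<Rightarrow> config" where
  "acc_conf s \<tau> = (\<tau>, acc_work s)"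

definition rej_conf :: "nat \<Rightarrow> bool list \<Rightarrow> config" where
  "rej_conf s \<tau> = (\<tau>, rej_work s)"

definition halted :: "nat \<Rightarrow> config \<Rightarrow> bool" where
  "halted s v \<longleftrightarrow> snd v = acc_work s \<or> snd v = rej_work s"

definition configs :: "nat \<Rightarrow> nat \<Rightarrow> config set" where
  "configs c s = {v. length (fst v) = c \<and> length (snd v) = s}"

text \<open>Run of the machine on input x from catalytic tape tau under the
  choice sequence ch (a halted configuration stays put).\<close>
fun run :: "machine \<Rightarrow> nat \<Rightarrow> bool list \<Rightarrow> bool list \<Rightarrow> (nat \<Rightarrow> bool) \<Rightarrow> nat \<Rightarrow> config" where
  "run M s x \<tau> ch 0 = (\<tau>, replicate s False)"
| "run M s x \<tau> ch (Suc k) =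
     (let v = run M s x \<tau> ch k in if halted s v then v else M x (ch k) v)"

definition valid_catalytic :: "machine \<Rightarrow> (nat \<Rightarrow> nat) \<Rightarrow> (nat \<Rightarrow> nat) \<Rightarrow> bool" where
  "valid_catalytic M s c \<longleftrightarrow>
     (\<forall>x b v. v \<in> configs (c (length x)) (s (length x)) \<longrightarrow>
          M x b v \<in> configs (c (length x)) (s (length x))) \<and>
     (\<forall>x \<tau> ch. length \<tau> = c (length x) \<longrightarrow>
        (\<exists>k. halted (s (length x)) (run M (s (length x)) x \<tau> ch k)
             \<and> fst (run M (s (length x)) x \<tau> ch k) = \<tau>))"

definition edges0 :: "machine \<Rightarrow> nat \<Rightarrow> nat \<Rightarrow> bool list \<Rightarrow> (config \<times> config) set" where
  "edges0 M c s x = {(v, w). v \<in> configs c s \<and> \<not> halted s v \<and> w = M x False v}"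

definition comp0 :: "machine \<Rightarrow> nat \<Rightarrow> nat \<Rightarrow> bool list \<Rightarrow> config \<Rightarrow> config set" where
  "comp0 M c s x v = {w. (v, w) \<in> (edges0 M c s x \<union> (edges0 M c s x)\<inverse>)\<^sup>*}"

end

theory Submission
  imports Defs
begin

text \<open>The 0-graph is a functional graph: every non-halting configuration has exactly one
  outgoing 0-edge and halting configurations have none.  In a functional graph every vertex
  leads to the unique sink of its component, so a connected component contains at most one
  sink.  Hence the components of the distinct halting configurations \<open>acc\<^sub>\<tau>\<close> are pairwise
  disjoint subsets of the \<open>2\<^sup>c \<cdot> 2\<^sup>s\<close> configurations, and the sum of their sizes over
  all \<open>\<tau>\<close> is at most \<open>2\<^sup>c \<cdot> 2\<^sup>s\<close>.\<close>

lemma rtrancl_sym_imp_rtrancl_to_sink: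
  assumes "single_valued R" and sink: "a \<notin> Domain R"
    and "(a, w) \<in> (R \<union> R\<inverse>)\<^sup>*"
  shows "(w, a) \<in> R\<^sup>*"
  using assms(3)
proof (induction rule: rtrancl_induct)
  case base
  then show ?case by simp
next
  case (step u w)
  from step.hyps(2) show ?case
  proof
    assume "(u, w) \<in> R"
    then have "(w, a) \<in> R\<^sup>* \<or> (a, w) \<in> R\<^sup>*"
      using single_valued_confluent[OF \<open>single_valued R\<close>] step.IH by blast
    moreover have "(a, w) \<in> R\<^sup>* \<Longrightarrow> w = a"
      using sink by (auto elim: converse_rtranclE)
    ultimately show ?thesis by auto
  next
    assume "(u, w) \<in> R\<inverse>"
    then show ?thesis using step.IH by auto
  qed
qed

lemma rtrancl_sym_sinks_eq:
  assumes "single_valued R" and "a \<notin> Domain R" and "b \<notin> Domain R"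
    and "(a, b) \<in> (R \<union> R\<inverse>)\<^sup>*"
  shows "a = b"
  using rtrancl_sym_imp_rtrancl_to_sink[OF assms(1,2,4)] assms(3)
  by (auto elim: converse_rtranclE)

lemma single_valued_edges0: "single_valued (edges0 M c s x)"
  unfolding edges0_def by (auto intro: single_valuedI)

lemma halted_notin_Domain_edges0: "halted s v \<Longrightarrow> v \<notin> Domain (edges0 M c s x)"
  unfolding edges0_def by auto

lemma comp0_halted_disjoint:
  assumes "halted s a" and "halted s b" and "a \<noteq> b"
  shows "comp0 M c s x a \<inter> comp0 M c s x b = {}"
proof (rule ccontr)
  let ?U = "(edges0 M c s x \<union> (edges0 M c s x)\<inverse>)\<^sup>*"
  assume "comp0 M c s x a \<inter> comp0 M c s x b \<noteq> {}"
  then obtain w where "(a, w) \<in> ?U" and "(b, w) \<in> ?U"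
    unfolding comp0_def by blast
  moreover have "sym ?U"
    by (intro sym_rtrancl sym_Un_converse)
  ultimately have "(a, b) \<in> ?U"
    by (meson rtrancl_trans symD)
  then show False
    using rtrancl_sym_sinks_eq[OF single_valued_edges0 halted_notin_Domain_edges0
        halted_notin_Domain_edges0] assms by blast
qed

lemma comp0_subset_configs:
  assumes closed: "\<And>v. v \<in> configs c s \<Longrightarrow> M x False v \<in> configs c s"
    and "v \<in> configs c s"
  shows "comp0 M c s x v \<subseteq> configs c s"
proof
  fix w assume "w \<in> comp0 M c s x v"
  then have "(v, w) \<in> (edges0 M c s x \<union> (edges0 M c s x)\<inverse>)\<^sup>*"
    unfolding comp0_def by simp
  then show "w \<in> configs c s"
  proof (induction rule: rtrancl_induct)
    case base
    show ?case by (fact \<open>v \<in> configs c s\<close>)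
  next
    case (step u w)
    then show ?case using closed unfolding edges0_def by blast
  qed
qed

lemma configs_eq_Times: "configs c s = {\<tau>. length \<tau> = c} \<times> {u. length u = s}"
  unfolding configs_def by auto

lemma finite_bool_lists_length_eq: "finite {xs :: bool list. length xs = n}"
  using finite_lists_length_eq[of "UNIV :: bool set" n] by simp

lemma card_bool_lists_length_eq: "card {xs :: bool list. length xs = n} = 2 ^ n"
  using card_lists_length_eq[of "UNIV :: bool set" n] by simp

lemma finite_configs: "finite (configs c s)"
  unfolding configs_eq_Times by (simp add: finite_bool_lists_length_eq)

lemma card_configs: "card (configs c s) = 2 ^ c * 2 ^ s"
  unfolding configs_eq_Times card_cartesian_product by (simp add: card_bool_lists_length_eq)

lemma sum_card_comp0_halted_le:
  assumes closed: "\<And>v. v \<in> configs c s \<Longrightarrow> M x False v \<in> configs c s"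
    and H: "H \<subseteq> configs c s" "\<And>v. v \<in> H \<Longrightarrow> halted s v"
  shows "(\<Sum>v\<in>H. card (comp0 M c s x v)) \<le> 2 ^ c * 2 ^ s"
proof -
  have comp0_sub: "comp0 M c s x v \<subseteq> configs c s" if "v \<in> H" for v
    using comp0_subset_configs[of c s M x] closed H(1) that by blast
  have "finite H"
    using H(1) finite_configs by (rule finite_subset)
  moreover have "\<forall>v\<in>H. finite (comp0 M c s x v)"
    using comp0_sub finite_configs finite_subset by blast
  moreover have "\<forall>v\<in>H. \<forall>w\<in>H. v \<noteq> w \<longrightarrow> comp0 M c s x v \<inter> comp0 M c s x w = {}"
    using comp0_halted_disjoint H(2) by blast
  ultimately have "(\<Sum>v\<in>H. card (comp0 M c s x v)) = card (\<Union>v\<in>H. comp0 M c s x v)"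
    by (rule card_UN_disjoint[symmetric])
  also have "\<dots> \<le> card (configs c s)"
    using comp0_sub by (intro card_mono finite_configs) blast
  finally show ?thesis
    by (simp only: card_configs)
qed

lemma average_card_comp0_halted_le:
  fixes h :: "bool list \<Rightarrow> config"
  assumes closed: "\<And>v. v \<in> configs c s \<Longrightarrow> M x False v \<in> configs c s"
    and "inj h"
    and h: "\<And>\<tau>. length \<tau> = c \<Longrightarrow> h \<tau> \<in> configs c s \<and> halted s (h \<tau>)"
  shows "(\<Sum>\<tau>\<in>{\<tau>. length \<tau> = c}. real (card (comp0 M c s x (h \<tau>)))) / 2 ^ c \<le> 2 ^ s"
proof -
  let ?T = "{\<tau> :: bool list. length \<tau> = c}"
  have "(\<Sum>\<tau>\<in>?T. card (comp0 M c s x (h \<tau>))) = (\<Sum>v\<in>h ` ?T. card (comp0 M c s x v))"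
    by (simp only: sum.reindex[OF inj_on_subset[OF \<open>inj h\<close> subset_UNIV]] comp_def)
  also have "\<dots> \<le> 2 ^ c * 2 ^ s"
  proof (rule sum_card_comp0_halted_le)
    show "h ` ?T \<subseteq> configs c s" and "\<And>v. v \<in> h ` ?T \<Longrightarrow> halted s v"
      using h by blast+
  qed (fact closed)
  finally have "real (\<Sum>\<tau>\<in>?T. card (comp0 M c s x (h \<tau>))) \<le> real (2 ^ c * 2 ^ s)"
    by (rule of_nat_mono)
  then show ?thesis
    by (simp add: divide_le_eq mult.commute)
qed

theorem lemma4p7:
  fixes M :: machine and s c :: "nat \<Rightarrow> nat" and x :: "bool list"
  assumes valid: "valid_catalytic M s c"
    and s2: "\<And>n. 2 \<le> s n"
    and logs: "\<And>n. log 2 (real n) \<le> real (s n)"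
    and sc: "\<And>n. s n \<le> c n"
    and cs: "\<And>n. c n \<le> 2 ^ s n"
  shows "(\<Sum>\<tau>\<in>{\<tau>. length \<tau> = c (length x)}.
            real (card (comp0 M (c (length x)) (s (length x)) x (acc_conf (s (length x)) \<tau>))))
           / 2 ^ c (length x) \<le> 2 ^ s (length x)
    \<and> (\<Sum>\<tau>\<in>{\<tau>. length \<tau> = c (length x)}.
            real (card (comp0 M (c (length x)) (s (length x)) x (rej_conf (s (length x)) \<tau>))))
           / 2 ^ c (length x) \<le> 2 ^ s (length x)"
proof -
  let ?c = "c (length x)" and ?s = "s (length x)"
  have closed: "\<And>v. v \<in> configs ?c ?s \<Longrightarrow> M x False v \<in> configs ?c ?s"
    using valid unfolding valid_catalytic_def by blast
  have "inj (acc_conf ?s)" and "inj (rej_conf ?s)"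
    by (auto intro!: injI simp: acc_conf_def rej_conf_def)
  moreover have "length (acc_work ?s) = ?s" and "length (rej_work ?s) = ?s"
    using s2[of "length x"] by (simp_all add: acc_work_def rej_work_def)
  then have "acc_conf ?s \<tau> \<in> configs ?c ?s \<and> halted ?s (acc_conf ?s \<tau>)"
    and "rej_conf ?s \<tau> \<in> configs ?c ?s \<and> halted ?s (rej_conf ?s \<tau>)"
    if "length \<tau> = ?c" for \<tau>
    using that by (simp_all add: acc_conf_def rej_conf_def configs_def halted_def)
  ultimately show ?thesis
    using average_card_comp0_halted_le[of ?c ?s M x] closed by blast
qed

end
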